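(* Let $G$ be a connected graph with a pair of vertices of order $h$ and a marking $S$. Let $v,v'$ be two vertices of $G$ joined by exactly $e\geq1$ edges, with weights $s$ and $s'$ where $s>s'$, and normalize the marking (by adding a constant vector) so that $s'=0$; assume $s\ge 2$. Let $G'$ be obtained from $G$ by thickening the edges between $v$ and $v'$. Then the group $\Phi(G')$ contains $(\mathbb{Z}/es\mathbb{Z})^{s-2}$ as a direct summand.
   Context: Graphs are finite, connected, may have multiple edges, no loops. With $c_{ij}$ ($i\neq j$) the number of edges joining $v_i,v_j$, $c_{ii}=-\sum_{j\ne i}c_{ij}$ and $M(G)=(c_{ij})$, one has $\mathbb{Z}^n/\mathrm{Im}(M(G))\cong\mathbb{Z}\times\Phi(G)$ with $\Phi(G)$ the finite torsion subgroup ($\mathrm{Im}$ = $\mathbb{Z}$-span of columns). A pair $\{v_i,v_j\}$ has order $h>0$ if there is $S=(s_1,\dots,s_n)^t\in\mathbb{Z}^n$ with $M(G)S=h(e_i-e_j)$ and $\gcd(s_1-s_n,\dots,s_{n-1}-s_n)=1$; $S$ is a marking and $s_k$ the weight of $v_k$; $S+\alpha(1,\dots,1)^t$ is also a marking. Thickening the $e$ edges between $v'$ (weight $s'$) and $v$ (weight $s>s'$): delete them, add new vertices $w_1,\dots,w_{s-s'-1}$, and with $w_0=v'$, $w_{s-s'}=v$, join $w_{k-1}$ and $w_k$ by $e(s-s')$ edges for $k=1,\dots,s-s'$. *)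

theory Defs
  imports "HOL-Algebra.Algebra"
begin

text \<open>A multigraph on the vertex set {0..<n}: c i j = number of edges joining i and j.\<close>

definition multigraph :: "nat \<Rightarrow> (nat \<Rightarrow> nat \<Rightarrow> nat) \<Rightarrow> bool" where
  "multigraph n c \<longleftrightarrow> (\<forall>i j. c i j = c j i) \<and> (\<forall>i. c i i = 0)
     \<and> (\<forall>i j. (n \<le> i \<or> n \<le> j) \<longrightarrow> c i j = 0)"

definition connected_mg :: "nat \<Rightarrow> (nat \<Rightarrow> nat \<Rightarrow> nat) \<Rightarrow> bool" where
  "connected_mg n c \<longleftrightarrow> 0 < n \<and>
     (\<forall>i<n. \<forall>j<n. (\<lambda>x y. x < n \<and> y < n \<and> 0 < c x y)\<^sup>*\<^sup>* i j)"

definition lapM :: "nat \<Rightarrow> (nat \<Rightarrow> nat \<Rightarrow> nat) \<Rightarrow> nat \<Rightarrow> nat \<Rightarrow> int" where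
  "lapM n c i j = (if i = j then - (\<Sum>k\<in>{..<n} - {i}. int (c i k)) else int (c i j))"

definition zvecs :: "nat \<Rightarrow> (nat \<Rightarrow> int) set" where
  "zvecs n = {x. \<forall>i\<ge>n. x i = 0}"

definition mat_vec :: "nat \<Rightarrow> (nat \<Rightarrow> nat \<Rightarrow> int) \<Rightarrow> (nat \<Rightarrow> int) \<Rightarrow> (nat \<Rightarrow> int)" where
  "mat_vec n A x = (\<lambda>i. if i < n then (\<Sum>j<n. A i j * x j) else 0)"

definition zvec_group :: "nat \<Rightarrow> (nat \<Rightarrow> int) monoid" where
  "zvec_group n = \<lparr>carrier = zvecs n, monoid.mult = (\<lambda>x y k. x k + y k), one = (\<lambda>_. 0)\<rparr>"

definition lap_image :: "nat \<Rightarrow> (nat \<Rightarrow> nat \<Rightarrow> nat) \<Rightarrow> (nat \<Rightarrow> int) set" where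
  "lap_image n c = mat_vec n (lapM n c) ` zvecs n"

definition coker_group :: "nat \<Rightarrow> (nat \<Rightarrow> nat \<Rightarrow> nat) \<Rightarrow> (nat \<Rightarrow> int) set monoid" where
  "coker_group n c = zvec_group n Mod lap_image n c"

definition critical_group :: "nat \<Rightarrow> (nat \<Rightarrow> nat \<Rightarrow> nat) \<Rightarrow> (nat \<Rightarrow> int) set monoid" where
  "critical_group n c = (coker_group n c)\<lparr>carrier :=
     {a \<in> carrier (coker_group n c). \<exists>k::nat. 0 < k \<and> a [^]\<^bsub>coker_group n c\<^esub> k = \<one>\<^bsub>coker_group n c\<^esub>}\<rparr>"

text \<open>The pair {v_i, v_j} has order h with marking S (vertices 0..<n, the last one is n-1).\<close>

definition unit_vec :: "nat \<Rightarrow> nat \<Rightarrow> int" where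
  "unit_vec i = (\<lambda>k. if k = i then 1 else 0)"

definition is_marking :: "nat \<Rightarrow> (nat \<Rightarrow> nat \<Rightarrow> nat) \<Rightarrow> nat \<Rightarrow> nat \<Rightarrow> int \<Rightarrow> (nat \<Rightarrow> int) \<Rightarrow> bool" where
  "is_marking n c i j h S \<longleftrightarrow> S \<in> zvecs n \<and>
     mat_vec n (lapM n c) S = (\<lambda>k. h * (unit_vec i k - unit_vec j k)) \<and>
     Gcd ((\<lambda>k. S k - S (n - 1)) ` {..<n - 1}) = 1"

definition pair_order :: "nat \<Rightarrow> (nat \<Rightarrow> nat \<Rightarrow> nat) \<Rightarrow> nat \<Rightarrow> nat \<Rightarrow> int \<Rightarrow> bool" where
  "pair_order n c i j h \<longleftrightarrow> i < n \<and> j < n \<and> i \<noteq> j \<and> 0 < h \<and> (\<exists>S. is_marking n c i j h S)"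

text \<open>Thickening the edges between v' (weight s') and v (weight s > s'), with d = s - s'.
  New vertices w_1..w_{d-1} are n, ..., n+d-2; w_0 = v', w_d = v.\<close>

definition thick_vertex :: "nat \<Rightarrow> nat \<Rightarrow> nat \<Rightarrow> nat \<Rightarrow> nat \<Rightarrow> nat" where
  "thick_vertex n v v' d k = (if k = 0 then v' else if k = d then v else n + k - 1)"

definition thicken :: "nat \<Rightarrow> (nat \<Rightarrow> nat \<Rightarrow> nat) \<Rightarrow> nat \<Rightarrow> nat \<Rightarrow> nat \<Rightarrow> (nat \<Rightarrow> nat \<Rightarrow> nat)" where
  "thicken n c v v' d = (\<lambda>x y.
     (if {x, y} = {v, v'} then 0 else c x y)
     + (if \<exists>k\<in>{1..d}. {x, y} = {thick_vertex n v v' d (k - 1), thick_vertex n v v' d k}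
        then c v v' * d else 0))"

definition zmod_power :: "nat \<Rightarrow> nat \<Rightarrow> (nat \<Rightarrow> int) monoid" where
  "zmod_power m k = product_group {..<k} (\<lambda>_. integer_mod_group m)"

definition direct_summand_iso :: "('a, 'c) monoid_scheme \<Rightarrow> ('b, 'd) monoid_scheme \<Rightarrow> bool" where
  "direct_summand_iso H G \<longleftrightarrow> (\<exists>A B. subgroup A G \<and> subgroup B G \<and> A \<inter> B = {\<one>\<^bsub>G\<^esub>}
     \<and> A <#>\<^bsub>G\<^esub> B = carrier G \<and> G\<lparr>carrier := A\<rparr> \<cong> H)"

end

theory Submission
  imports Defs "HOL-Library.Function_Algebras"
begin

(* Let d = s - s' and m = e d. The new vertices w_1, ..., w_(d-1) are n, ..., n + d - 2, and every
   edge at a new vertex has multiplicity m, so the rows and columns of M(G') at new vertices are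
   divisible by m. Hence reading the coordinates at w_1, ..., w_(d-2) modulo m is a homomorphism
   from Z^N / Im M(G') onto (Z/mZ)^(d-2). It has a section with values in the torsion subgroup:
   let y_t be the ramp along the path w_0, ..., w_d that starts growing at w_(t+1) and is cut off
   at v = w_d. Since y_t lives on new vertices, M(G') y_t = m b_t for an integer vector b_t, which
   is therefore m-torsion modulo Im M(G'); and at w_(s+1), s < d - 2, the entry of b_t is the
   second difference of y_t, which is 1 if s = t and 0 otherwise. *)

lemma direct_summand_iso_of_retraction:
  assumes G: "group G" and H: "group H"
    and \<sigma>: "\<sigma> \<in> hom H G" and \<pi>: "\<pi> \<in> hom G H"
    and retraction: "\<And>a. a \<in> carrier H \<Longrightarrow> \<pi> (\<sigma> a) = a"
  shows "direct_summand_iso H G"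
proof -
  interpret G: group G by (rule G)
  interpret \<sigma>: group_hom H G \<sigma> using G H \<sigma> by (simp add: group_hom_def group_hom_axioms_def)
  interpret \<pi>: group_hom G H \<pi> using G H \<pi> by (simp add: group_hom_def group_hom_axioms_def)
  define A where "A = \<sigma> ` carrier H"
  define B where "B = kernel G H \<pi>"
  have A: "subgroup A G" unfolding A_def by (rule \<sigma>.img_is_subgroup)
  have B: "subgroup B G" unfolding B_def by (rule \<pi>.subgroup_kernel)
  have "A \<inter> B \<subseteq> {\<one>\<^bsub>G\<^esub>}"
  proof
    fix x assume "x \<in> A \<inter> B"
    then obtain a where "a \<in> carrier H" "x = \<sigma> a" "\<pi> x = \<one>\<^bsub>H\<^esub>"
      unfolding A_def B_def kernel_def by auto
    then show "x \<in> {\<one>\<^bsub>G\<^esub>}" using retraction by auto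
  qed
  then have AB: "A \<inter> B = {\<one>\<^bsub>G\<^esub>}"
    using subgroup.one_closed[OF A] subgroup.one_closed[OF B] by auto
  have "carrier G \<subseteq> A <#>\<^bsub>G\<^esub> B"
  proof
    fix x assume x: "x \<in> carrier G"
    define y where "y = \<sigma> (\<pi> x)"
    have y: "y \<in> A" "y \<in> carrier G" unfolding y_def A_def using x by auto
    have "\<pi> (inv\<^bsub>G\<^esub> y \<otimes>\<^bsub>G\<^esub> x) = \<one>\<^bsub>H\<^esub>"
      using x y retraction[of "\<pi> x"] by (simp add: y_def \<pi>.hom_inv)
    then have "inv\<^bsub>G\<^esub> y \<otimes>\<^bsub>G\<^esub> x \<in> B" unfolding B_def kernel_def using x y by simp
    moreover have "x = y \<otimes>\<^bsub>G\<^esub> (inv\<^bsub>G\<^esub> y \<otimes>\<^bsub>G\<^esub> x)"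
      using x y by (simp add: G.m_assoc[symmetric])
    ultimately show "x \<in> A <#>\<^bsub>G\<^esub> B" unfolding set_mult_def using y by blast
  qed
  then have AB_carrier: "A <#>\<^bsub>G\<^esub> B = carrier G"
    using G.set_mult_closed subgroup.subset[OF A] subgroup.subset[OF B] by blast
  have "\<pi> \<in> hom (G\<lparr>carrier := A\<rparr>) H"
    using \<pi> subgroup.subset[OF A] by (auto simp: hom_def subset_iff)
  moreover have "bij_betw \<pi> A (carrier H)"
    unfolding bij_betw_def inj_on_def A_def using retraction by force
  ultimately have "\<pi> \<in> iso (G\<lparr>carrier := A\<rparr>) H" by (simp add: iso_def)
  then show ?thesis
    unfolding direct_summand_iso_def is_iso_def using A B AB AB_carrier by blast
qed

definition torsion_subgroup :: "('a, 'b) monoid_scheme \<Rightarrow> ('a, 'b) monoid_scheme" where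
  "torsion_subgroup G = G\<lparr>carrier :=
     {a \<in> carrier G. \<exists>k::nat. 0 < k \<and> a [^]\<^bsub>G\<^esub> k = \<one>\<^bsub>G\<^esub>}\<rparr>"

lemma critical_group_eq_torsion_subgroup:
  "critical_group n c = torsion_subgroup (zvec_group n Mod lap_image n c)"
  by (simp add: critical_group_def torsion_subgroup_def coker_group_def)

lemma (in comm_group) subgroup_torsion_subgroup:
  "subgroup (carrier (torsion_subgroup G)) G"
proof (rule subgroupI)
  have "\<one> \<in> carrier (torsion_subgroup G)"
    unfolding torsion_subgroup_def by (auto intro!: exI[of _ "Suc 0"])
  then show "carrier (torsion_subgroup G) \<noteq> {}" by blast
next
  fix a assume "a \<in> carrier (torsion_subgroup G)"
  then obtain k :: nat where "a \<in> carrier G" "0 < k" "a [^] k = \<one>"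
    unfolding torsion_subgroup_def by auto
  then show "inv a \<in> carrier (torsion_subgroup G)"
    unfolding torsion_subgroup_def by (auto simp: nat_pow_inv)
next
  fix a b assume "a \<in> carrier (torsion_subgroup G)" "b \<in> carrier (torsion_subgroup G)"
  then obtain k l :: nat where ab: "a \<in> carrier G" "b \<in> carrier G" "0 < k" "0 < l"
      "a [^] k = \<one>" "b [^] l = \<one>"
    unfolding torsion_subgroup_def by auto
  have "(a \<otimes> b) [^] (k * l) = (a [^] k) [^] l \<otimes> (b [^] l) [^] k"
    using ab(1,2) by (simp add: pow_mult_distrib m_comm nat_pow_pow mult.commute[of l])
  also have "\<dots> = \<one>" using ab by simp
  finally have "(a \<otimes> b) [^] (k * l) = \<one>" .
  then show "a \<otimes> b \<in> carrier (torsion_subgroup G)"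
    unfolding torsion_subgroup_def using ab by (auto intro!: exI[of _ "k * l"])
qed (auto simp: torsion_subgroup_def)

lemma (in comm_group) group_torsion_subgroup: "group (torsion_subgroup G)"
  using subgroup.subgroup_is_group[OF subgroup_torsion_subgroup is_group]
  by (simp add: torsion_subgroup_def)

lemma zvec_group_simps [simp]:
  "carrier (zvec_group N) = zvecs N"
  "x \<otimes>\<^bsub>zvec_group N\<^esub> y = x + y"
  "\<one>\<^bsub>zvec_group N\<^esub> = 0"
  by (simp_all add: zvec_group_def plus_fun_def zero_fun_def)

lemma zvecs_add [simp]: "x \<in> zvecs N \<Longrightarrow> y \<in> zvecs N \<Longrightarrow> x + y \<in> zvecs N"
  and zvecs_uminus [simp]: "x \<in> zvecs N \<Longrightarrow> - x \<in> zvecs N"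
  and zvecs_zero [simp]: "0 \<in> zvecs N"
  by (simp_all add: zvecs_def)

lemma comm_group_zvec_group: "comm_group (zvec_group N)"
proof (rule comm_groupI)
  fix x assume "x \<in> carrier (zvec_group N)"
  then show "\<exists>y\<in>carrier (zvec_group N). y \<otimes>\<^bsub>zvec_group N\<^esub> x = \<one>\<^bsub>zvec_group N\<^esub>"
    by (intro bexI[of _ "- x"]) auto
qed (auto simp: add.commute add.assoc)

lemma zvec_group_inv [simp]: "x \<in> zvecs N \<Longrightarrow> inv\<^bsub>zvec_group N\<^esub> x = - x"
  using comm_group_zvec_group[of N]
  by (intro group.inv_equality) (auto simp: comm_group_def)

lemma zvec_group_nat_pow [simp]: "x [^]\<^bsub>zvec_group N\<^esub> (k::nat) = (\<lambda>i. int k * x i)"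
  by (induction k) (auto simp: algebra_simps)

lemma zvec_group_int_pow [simp]:
  assumes "x \<in> zvecs N"
  shows "x [^]\<^bsub>zvec_group N\<^esub> (c::int) = (\<lambda>i. c * x i)"
proof -
  have "(\<lambda>i. - (c * x i)) \<in> zvecs N" using assms by (simp add: zvecs_def)
  then show ?thesis by (auto simp: int_pow_def2 fun_eq_iff)
qed

definition lincomb :: "nat \<Rightarrow> (nat \<Rightarrow> int) \<Rightarrow> (nat \<Rightarrow> nat \<Rightarrow> int) \<Rightarrow> nat \<Rightarrow> int" where
  "lincomb k q z = (\<lambda>i. \<Sum>t<k. q t * z t i)"

lemma lincomb_zvecs: "(\<And>t. t < k \<Longrightarrow> z t \<in> zvecs N) \<Longrightarrow> lincomb k q z \<in> zvecs N"
  by (simp add: lincomb_def zvecs_def)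

lemma lincomb_add: "lincomb k (q + q') z = lincomb k q z + lincomb k q' z"
  by (auto simp: lincomb_def distrib_right sum.distrib)

lemma lincomb_delta:
  assumes "s < k" and "\<And>t. t < k \<Longrightarrow> z t i = (if t = s then 1 else 0)"
  shows "lincomb k q z i = q s"
proof -
  have "lincomb k q z i = (\<Sum>t<k. if t = s then q t else 0)"
    unfolding lincomb_def using assms(2) by (intro sum.cong) auto
  then show ?thesis using assms(1) by simp
qed

lemma mat_vec_hom: "mat_vec N A \<in> hom (zvec_group N) (zvec_group N)"
  by (rule homI) (auto simp: mat_vec_def zvecs_def distrib_left sum.distrib)

lemma subgroup_mat_vec_image: "subgroup (mat_vec N A ` zvecs N) (zvec_group N)"
proof -
  have "group_hom (zvec_group N) (zvec_group N) (mat_vec N A)"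
    using comm_group_zvec_group mat_vec_hom
    by (simp add: group_hom_def group_hom_axioms_def comm_group_def)
  then show ?thesis using group_hom.img_is_subgroup by fastforce
qed

lemma lincomb_mem_subgroup:
  assumes L: "subgroup L (zvec_group N)" and z: "\<And>t. t < k \<Longrightarrow> z t \<in> L"
  shows "lincomb k q z \<in> L"
  using z
proof (induction k)
  case 0
  then show ?case using subgroup.one_closed[OF L] by (simp add: lincomb_def zero_fun_def)
next
  case (Suc k)
  have "z k [^]\<^bsub>zvec_group N\<^esub> q k \<in> L"
    using comm_group_zvec_group Suc.prems L
    by (simp add: comm_group_def group.subgroup_int_pow_closed)
  moreover have "z k \<in> zvecs N" using Suc.prems subgroup.subset[OF L] by auto
  ultimately have "(\<lambda>i. q k * z k i) \<in> L" by simp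
  moreover have "lincomb (Suc k) q z = lincomb k q z + (\<lambda>i. q k * z k i)"
    by (simp add: lincomb_def plus_fun_def)
  moreover have "lincomb k q z \<in> L" using Suc by simp
  ultimately show ?case using subgroup.m_closed[OF L] by (metis zvec_group_simps(2))
qed

lemma rcos_zvec_group_eq_iff:
  assumes L: "subgroup L (zvec_group N)" and "x \<in> zvecs N" "y \<in> zvecs N"
  shows "L #>\<^bsub>zvec_group N\<^esub> x = L #>\<^bsub>zvec_group N\<^esub> y \<longleftrightarrow> x - y \<in> L"
proof -
  interpret G: group "zvec_group N"
    using comm_group_zvec_group by (simp add: comm_group_def)
  have "x \<in> L #>\<^bsub>zvec_group N\<^esub> y \<longleftrightarrow> x - y \<in> L"
    using subgroup.rcos_module[OF L G.is_group] assms by simp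
  then show ?thesis
    using G.repr_independence[OF _ _ L] G.rcos_self[OF _ L] assms by auto
qed

lemma zmod_coordinates_hom_quotient:
  assumes L: "subgroup L (zvec_group N)" and m: "0 < m"
    and L_dvd: "\<And>x t. x \<in> L \<Longrightarrow> t < k \<Longrightarrow> int m dvd x (r t)"
  obtains \<pi> where "\<pi> \<in> hom (zvec_group N Mod L) (zmod_power m k)"
    and "\<And>x. x \<in> zvecs N \<Longrightarrow>
      \<pi> (L #>\<^bsub>zvec_group N\<^esub> x) = (\<lambda>t\<in>{..<k}. x (r t) mod int m)"
proof -
  define \<phi> where "\<phi> x = (\<lambda>t\<in>{..<k}. x (r t) mod int m)" for x :: "nat \<Rightarrow> int"
  have \<phi>: "\<phi> \<in> hom (zvec_group N) (zmod_power m k)"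
    using m by (intro homI) (auto simp: \<phi>_def zmod_power_def carrier_integer_mod_group mod_add_eq)
  have normal: "L \<lhd> zvec_group N"
    using comm_group.subgroup_imp_normal[OF comm_group_zvec_group L] .
  have \<phi>_coset: "\<phi> x = \<phi> y"
    if "x \<in> zvecs N" "y \<in> zvecs N" "L #>\<^bsub>zvec_group N\<^esub> x = L #>\<^bsub>zvec_group N\<^esub> y" for x y
  proof -
    have "x - y \<in> L" using rcos_zvec_group_eq_iff[OF L] that by simp
    then have "int m dvd x (r t) - y (r t)" if "t < k" for t
      using L_dvd[of "x - y" t] that by simp
    then show ?thesis unfolding \<phi>_def by (auto simp: mod_eq_dvd_iff intro!: restrict_ext)
  qed
  obtain \<pi> where \<pi>: "\<pi> \<in> hom (zvec_group N Mod L) (zmod_power m k)"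
    and \<pi>_coset: "\<And>x. x \<in> carrier (zvec_group N) \<Longrightarrow> \<pi> (L #>\<^bsub>zvec_group N\<^esub> x) = \<phi> x"
    by (rule FactGroup_universal[OF \<phi> normal]) (auto intro: \<phi>_coset)
  show thesis
  proof (rule that[OF \<pi>])
    show "\<pi> (L #>\<^bsub>zvec_group N\<^esub> x) = (\<lambda>t\<in>{..<k}. x (r t) mod int m)" if "x \<in> zvecs N" for x
      using \<pi>_coset[of x] that by (simp add: \<phi>_def)
  qed
qed

lemma lincomb_hom_torsion_quotient:
  assumes L: "subgroup L (zvec_group N)" and m: "0 < m"
    and b: "\<And>t. t < k \<Longrightarrow> b t \<in> zvecs N"
    and m_b: "\<And>t. t < k \<Longrightarrow> (\<lambda>i. int m * b t i) \<in> L"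
  shows "(\<lambda>a. L #>\<^bsub>zvec_group N\<^esub> lincomb k a b)
           \<in> hom (zmod_power m k) (torsion_subgroup (zvec_group N Mod L))"
proof -
  let ?G = "zvec_group N"
  let ?Q = "?G Mod L"
  interpret G: comm_group ?G by (rule comm_group_zvec_group)
  interpret L: normal L ?G using G.subgroup_imp_normal[OF L] .
  have proj: "(\<lambda>x. L #>\<^bsub>?G\<^esub> x) \<in> hom ?G ?Q" by (rule L.r_coset_hom_Mod)
  have lincomb_b: "lincomb k q b \<in> zvecs N" for q using lincomb_zvecs b .
  have m_lincomb: "(\<lambda>i. int m * lincomb k q b i) \<in> L" for q
  proof -
    have "(\<lambda>i. int m * lincomb k q b i) = lincomb k q (\<lambda>t i. int m * b t i)"
      by (auto simp: lincomb_def sum_distrib_left algebra_simps)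
    then show ?thesis using lincomb_mem_subgroup[OF L m_b] by simp
  qed
  have torsion: "L #>\<^bsub>?G\<^esub> lincomb k a b \<in> carrier (torsion_subgroup ?Q)" for a
  proof -
    have "(L #>\<^bsub>?G\<^esub> lincomb k a b) [^]\<^bsub>?Q\<^esub> m = L #>\<^bsub>?G\<^esub> (\<lambda>i. int m * lincomb k a b i)"
      using L.FactGroup_pow[of "lincomb k a b" m] lincomb_b by simp
    also have "\<dots> = \<one>\<^bsub>?Q\<^esub>" using subgroup.rcos_const[OF L G.is_group m_lincomb] by simp
    finally show ?thesis
      using m proj lincomb_b unfolding torsion_subgroup_def by (auto simp: hom_def)
  qed
  have mult: "L #>\<^bsub>?G\<^esub> lincomb k (a \<otimes>\<^bsub>zmod_power m k\<^esub> a') b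
      = (L #>\<^bsub>?G\<^esub> lincomb k a b) \<otimes>\<^bsub>?Q\<^esub> (L #>\<^bsub>?G\<^esub> lincomb k a' b)" for a a'
  proof -
    define q where "q t = (a t + a' t) div int m" for t
    have "(a t + a' t) * b t i = (a \<otimes>\<^bsub>zmod_power m k\<^esub> a') t * b t i + int m * (q t * b t i)"
      if "t < k" for t i
    proof -
      have "(a \<otimes>\<^bsub>zmod_power m k\<^esub> a') t = (a t + a' t) mod int m"
        using that by (simp add: zmod_power_def)
      then show ?thesis unfolding q_def by (metis mod_mult_div_eq distrib_right mult.assoc)
    qed
    then have "lincomb k (a + a') b - lincomb k (a \<otimes>\<^bsub>zmod_power m k\<^esub> a') b
        = (\<lambda>i. int m * lincomb k q b i)"
      by (simp add: lincomb_def fun_eq_iff sum_distrib_left sum_subtractf[symmetric])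
    then have "L #>\<^bsub>?G\<^esub> lincomb k (a \<otimes>\<^bsub>zmod_power m k\<^esub> a') b = L #>\<^bsub>?G\<^esub> lincomb k (a + a') b"
      using rcos_zvec_group_eq_iff[OF L] m_lincomb lincomb_b by metis
    also have "\<dots> = L #>\<^bsub>?G\<^esub> (lincomb k a b + lincomb k a' b)" by (simp add: lincomb_add)
    also have "\<dots> = (L #>\<^bsub>?G\<^esub> lincomb k a b) \<otimes>\<^bsub>?Q\<^esub> (L #>\<^bsub>?G\<^esub> lincomb k a' b)"
      using hom_mult[OF proj] lincomb_b by simp
    finally show ?thesis .
  qed
  show ?thesis using torsion mult by (intro homI) (auto simp: torsion_subgroup_def)
qed

lemma zmod_power_direct_summand_torsion_quotient:
  assumes L: "subgroup L (zvec_group N)" and m: "0 < m"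
    and L_dvd: "\<And>x t. x \<in> L \<Longrightarrow> t < k \<Longrightarrow> int m dvd x (r t)"
    and b: "\<And>t. t < k \<Longrightarrow> b t \<in> zvecs N"
    and m_b: "\<And>t. t < k \<Longrightarrow> (\<lambda>i. int m * b t i) \<in> L"
    and b_r: "\<And>t s. t < k \<Longrightarrow> s < k \<Longrightarrow> b t (r s) = (if t = s then 1 else 0)"
  shows "direct_summand_iso (zmod_power m k) (torsion_subgroup (zvec_group N Mod L))"
proof -
  let ?Q = "zvec_group N Mod L"
  obtain \<pi> where \<pi>: "\<pi> \<in> hom ?Q (zmod_power m k)"
    and \<pi>_coset: "\<And>x. x \<in> zvecs N \<Longrightarrow>
      \<pi> (L #>\<^bsub>zvec_group N\<^esub> x) = (\<lambda>t\<in>{..<k}. x (r t) mod int m)"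
    using zmod_coordinates_hom_quotient[of L N m k r] L m L_dvd by blast
  define \<sigma> where "\<sigma> a = L #>\<^bsub>zvec_group N\<^esub> lincomb k a b" for a
  interpret Q: comm_group ?Q
    using comm_group.abelian_FactGroup[OF comm_group_zvec_group L] .
  have \<pi>_torsion: "\<pi> \<in> hom (torsion_subgroup ?Q) (zmod_power m k)"
    using \<pi> by (auto simp: hom_def torsion_subgroup_def)
  have \<sigma>: "\<sigma> \<in> hom (zmod_power m k) (torsion_subgroup ?Q)"
    unfolding \<sigma>_def using lincomb_hom_torsion_quotient[OF L m b m_b] .
  have retraction: "\<pi> (\<sigma> a) = a" if "a \<in> carrier (zmod_power m k)" for a
  proof -
    have "\<pi> (\<sigma> a) = (\<lambda>t\<in>{..<k}. lincomb k a b (r t) mod int m)"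
      unfolding \<sigma>_def using \<pi>_coset lincomb_zvecs b by blast
    also have "\<dots> = (\<lambda>t\<in>{..<k}. a t mod int m)"
      using lincomb_delta b_r by (intro restrict_ext) simp
    also have "\<dots> = a"
      using that m by (auto simp: zmod_power_def carrier_integer_mod_group PiE_iff extensional_def)
    finally show ?thesis .
  qed
  show ?thesis
    by (rule direct_summand_iso_of_retraction[OF Q.group_torsion_subgroup _ \<sigma> \<pi>_torsion retraction])
      (simp add: zmod_power_def)
qed

lemma dvd_mat_vec: "(\<And>j. j < N \<Longrightarrow> c dvd A i j * y j) \<Longrightarrow> c dvd mat_vec N A y i"
  unfolding mat_vec_def by (auto intro!: dvd_sum)

lemma mat_vec_zvecs: "mat_vec N A y \<in> zvecs N"
  by (simp add: mat_vec_def zvecs_def)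

lemma thicken_sym: "multigraph n c \<Longrightarrow> thicken n c v v' d x y = thicken n c v v' d y x"
  unfolding thicken_def multigraph_def by (simp add: insert_commute)

lemma thicken_new_vertex:
  assumes "multigraph n c" "v < n" "v' < n" "n \<le> p"
  shows "thicken n c v v' d p q =
    (if \<exists>j\<in>{1..d}. {p, q} = {thick_vertex n v v' d (j - 1), thick_vertex n v v' d j}
     then c v v' * d else 0)"
proof -
  have "{p, q} \<noteq> {v, v'}" using assms by (auto simp: doubleton_eq_iff)
  moreover have "c p q = 0" using assms unfolding multigraph_def by auto
  ultimately show ?thesis unfolding thicken_def by simp
qed

lemma dvd_lapM_thicken:
  assumes mg: "multigraph n c" and vn: "v < n" "v' < n" and pq: "n \<le> p \<or> n \<le> q"
  shows "int (c v v' * d) dvd lapM N (thicken n c v v' d) p q"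
proof -
  have new_vertex: "int (c v v' * d) dvd int (thicken n c v v' d p' q')" if "n \<le> p'" for p' q'
    unfolding int_dvd_int_iff thicken_new_vertex[OF mg vn that] by simp
  show ?thesis
  proof (cases "p = q")
    case True
    then show ?thesis
      using new_vertex pq unfolding lapM_def by (auto intro!: dvd_sum)
  next
    case False
    have "int (c v v' * d) dvd int (thicken n c v v' d p q)"
      using pq new_vertex[of p q] new_vertex[of q p] thicken_sym[OF mg, of v v' d p q] by auto
    then show ?thesis using False unfolding lapM_def by (simp only: if_False)
  qed
qed

lemma thicken_row:
  assumes mg: "multigraph n c" and vn: "v < n" "v' < n" and sd: "s + 2 < d"
  shows "thicken n c v v' d (n + s) q =
     (if q = thick_vertex n v v' d s \<or> q = n + s + 1 then c v v' * d else 0)"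
proof -
  let ?tv = "thick_vertex n v v' d"
  have tv_high: "?tv j = n + s \<longleftrightarrow> j = s + 1" for j
    using vn sd unfolding thick_vertex_def by auto
  have tv: "?tv (s + 1) = n + s" "?tv (s + 2) = n + s + 1"
    using sd unfolding thick_vertex_def by auto
  have adjacent: "(\<exists>j\<in>{1..d}. {n + s, q} = {?tv (j - 1), ?tv j}) \<longleftrightarrow> q = ?tv s \<or> q = n + s + 1"
  proof
    assume "\<exists>j\<in>{1..d}. {n + s, q} = {?tv (j - 1), ?tv j}"
    then obtain j where j: "j \<in> {1..d}" "{n + s, q} = {?tv (j - 1), ?tv j}" by blast
    then consider "n + s = ?tv (j - 1)" "q = ?tv j" | "n + s = ?tv j" "q = ?tv (j - 1)"
      by (auto simp: doubleton_eq_iff)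
    then show "q = ?tv s \<or> q = n + s + 1"
    proof cases
      case 1
      then have "j = s + 2" using j(1) tv_high[of "j - 1"] by auto
      then show ?thesis using 1 tv by simp
    next
      case 2
      then have "j = s + 1" using tv_high by metis
      then show ?thesis using 2 by simp
    qed
  next
    assume "q = ?tv s \<or> q = n + s + 1"
    then show "\<exists>j\<in>{1..d}. {n + s, q} = {?tv (j - 1), ?tv j}"
      using sd tv by (auto intro: bexI[of _ "s + 1"] bexI[of _ "s + 2"])
  qed
  show ?thesis by (simp only: thicken_new_vertex[OF mg vn le_add1] adjacent)
qed

lemma mat_vec_lapM_thicken_row:
  assumes mg: "multigraph n c" and vn: "v < n" "v' < n" and sd: "s + 2 < d"
  defines "N \<equiv> n + d - 1" and "w \<equiv> thick_vertex n v v' d s" and "m \<equiv> int (c v v' * d)"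
  shows "mat_vec N (lapM N (thicken n c v v' d)) y (n + s)
           = m * (y w + y (n + s + 1) - 2 * y (n + s))"
proof -
  let ?c = "thicken n c v v' d"
  have row: "int (?c (n + s) q) = (if q = w then m else 0) + (if q = n + s + 1 then m else 0)" for q
    using thicken_row[OF mg vn sd] vn sd unfolding w_def m_def thick_vertex_def by auto
  have w: "w \<noteq> n + s" "w \<noteq> n + s + 1" "w < N"
    using vn sd unfolding w_def N_def thick_vertex_def by auto
  have s: "n + s < N" "n + s + 1 < N" using sd unfolding N_def by auto
  have degree: "(\<Sum>q\<in>{..<N} - {n + s}. int (?c (n + s) q)) = 2 * m"
    using w s by (simp add: row sum.distrib)
  have "mat_vec N (lapM N ?c) y (n + s) = (\<Sum>j<N. lapM N ?c (n + s) j * y j)"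
    using s unfolding mat_vec_def by simp
  also have "\<dots> = (\<Sum>j<N. (if j = w then m * y j else 0) + (if j = n + s + 1 then m * y j else 0)
        + (if j = n + s then - 2 * m * y j else 0))"
    using w degree unfolding lapM_def by (intro sum.cong) (auto simp: row)
  also have "\<dots> = m * (y w + y (n + s + 1) - 2 * y (n + s))"
    using w s by (simp add: sum.distrib algebra_simps)
  finally show ?thesis .
qed

(* At w_k = n + k - 1 (0 < k < d) the value is max (k - t - 1) 0; the ramp vanishes at
   v = w_d and on the vertices of G. *)
definition thicken_ramp :: "nat \<Rightarrow> nat \<Rightarrow> nat \<Rightarrow> nat \<Rightarrow> int" where
  "thicken_ramp n d t p = (if n + t + 1 \<le> p \<and> p < n + d - 1 then int (p - n - t) else 0)"

lemma thicken_ramp_zvecs: "thicken_ramp n d t \<in> zvecs (n + d - 1)"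
  unfolding thicken_ramp_def zvecs_def by simp

lemma thicken_ramp_second_difference:
  assumes "v' < n" "s + 2 < d" "t + 2 < d"
  shows "thicken_ramp n d t (thick_vertex n v v' d s) + thicken_ramp n d t (n + s + 1)
           - 2 * thicken_ramp n d t (n + s) = (if t = s then 1 else 0)"
  using assms unfolding thicken_ramp_def thick_vertex_def by auto

lemma dvd_mat_vec_lapM_thicken_ramp:
  assumes "multigraph n c" "v < n" "v' < n"
  shows "int (c v v' * d) dvd mat_vec N (lapM N (thicken n c v v' d)) (thicken_ramp n d t) i"
  using dvd_lapM_thicken[OF assms] by (intro dvd_mat_vec) (simp add: thicken_ramp_def)

lemma mat_vec_lapM_thicken_ramp:
  assumes mg: "multigraph n c" and vn: "v < n" "v' < n" and "s + 2 < d" "t + 2 < d"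
  shows "mat_vec (n + d - 1) (lapM (n + d - 1) (thicken n c v v' d)) (thicken_ramp n d t) (n + s)
           = (if t = s then int (c v v' * d) else 0)"
  using mat_vec_lapM_thicken_row[OF mg vn assms(4)] thicken_ramp_second_difference[OF vn(2) assms(4,5)]
  by simp

lemma zmod_power_direct_summand_critical_group_thicken:
  assumes mg: "multigraph n c" and vn: "v < n" "v' < n" and e: "0 < c v v'" and d: "2 \<le> d"
  shows "direct_summand_iso (zmod_power (c v v' * d) (d - 2))
           (critical_group (n + d - 1) (thicken n c v v' d))"
proof -
  define N where "N = n + d - 1"
  define A where "A = lapM N (thicken n c v v' d)"
  define m where "m = c v v' * d"
  define b where "b t = (\<lambda>i. mat_vec N A (thicken_ramp n d t) i div int m)" for t
  have m_b: "(\<lambda>i. int m * b t i) = mat_vec N A (thicken_ramp n d t)" for t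
    using dvd_mat_vec_lapM_thicken_ramp[OF mg vn] unfolding b_def A_def m_def by simp
  have "direct_summand_iso (zmod_power m (d - 2))
          (torsion_subgroup (zvec_group N Mod mat_vec N A ` zvecs N))"
  proof (rule zmod_power_direct_summand_torsion_quotient[where r = "\<lambda>t. n + t" and b = b])
    show "subgroup (mat_vec N A ` zvecs N) (zvec_group N)" by (rule subgroup_mat_vec_image)
    show "0 < m" using e d unfolding m_def by simp
    show "int m dvd x (n + t)" if "x \<in> mat_vec N A ` zvecs N" for x t
      using that dvd_lapM_thicken[OF mg vn] unfolding A_def m_def by (auto intro: dvd_mat_vec)
    show "b t \<in> zvecs N" for t
      using mat_vec_zvecs unfolding b_def zvecs_def by simp
    show "(\<lambda>i. int m * b t i) \<in> mat_vec N A ` zvecs N" for t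
      using m_b thicken_ramp_zvecs unfolding N_def by simp
    show "b t (n + s) = (if t = s then 1 else 0)" if "t < d - 2" "s < d - 2" for t s
      using that e d mat_vec_lapM_thicken_ramp[OF mg vn, of s d t]
      unfolding b_def A_def N_def m_def by simp
  qed
  then show ?thesis
    unfolding critical_group_eq_torsion_subgroup lap_image_def N_def A_def m_def .
qed

theorem lemma1p7:
  fixes n :: nat and c :: "nat \<Rightarrow> nat \<Rightarrow> nat" and i j v v' :: nat and h :: int
    and S :: "nat \<Rightarrow> int"
  assumes "multigraph n c" and "connected_mg n c"
    and "pair_order n c i j h" and "is_marking n c i j h S"
    and "v < n" and "v' < n" and "v \<noteq> v'" and "1 \<le> c v v'"
    and "S v' < S v" and "2 \<le> S v - S v'"
  shows "direct_summand_iso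
           (zmod_power (c v v' * nat (S v - S v')) (nat (S v - S v') - 2))
           (critical_group (n + nat (S v - S v') - 1)
              (thicken n c v v' (nat (S v - S v'))))"
proof (rule zmod_power_direct_summand_critical_group_thicken)
  show "0 < c v v'" using assms(8) by simp
  show "2 \<le> nat (S v - S v')" using assms(10) by linarith
qed (use assms in auto)

end
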